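(* For all integers $m \geq 0$ and $n \geq 1$, \[ \sum_{k=0}^{n-1}\binom{m+k}{m}\binom{-n}{k}\binom{-n}{n-1-k} = \sum_{k=0}^{m}\binom{m}{k}\binom{-n}{k}\binom{-2n-k}{n-1-k}. \]
   Context: For a complex number $\alpha$ and an integer $k \geq 0$, $\binom{\alpha}{k} = \frac{\alpha(\alpha-1)\cdots(\alpha-k+1)}{k!}$ (equal to $1$ for $k=0$), and $\binom{\alpha}{k} = 0$ for integers $k < 0$. *)

theory Defs
  imports Complex_Main
begin

definition gbinom :: "real \<Rightarrow> int \<Rightarrow> real" where
  "gbinom a k = (if k < 0 then 0 else a gchoose (nat k))"

end

theory Submission
  imports Defs "HOL-Computational_Algebra.Formal_Power_Series"
begin

text \<open>
  Write \<open>a = -n\<close> and \<open>N = n - 1\<close>. Vandermonde's identity expands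
  \<open>binom(m+k, m) = \<Sum>\<^sub>j binom(m, j) binom(k, j)\<close>; after swapping the two sums it remains
  to evaluate \<open>\<Sum>\<^sub>k binom(k, j) binom(a, k) binom(a, N-k)\<close>. Trinomial revision turns
  \<open>binom(k, j) binom(a, k)\<close> into \<open>binom(a, j) binom(a-j, k-j)\<close>, and the generalised
  Vandermonde convolution then gives \<open>binom(a, j) binom(2a-j, N-j)\<close>.
\<close>

lemma choose_add_eq_sum_choose_mult:
  "(m + k) choose m = (\<Sum>j\<le>m. (m choose j) * (k choose j))"
proof -
  have "(m + k) choose m = (\<Sum>j\<le>m. (k choose j) * (m choose (m - j)))"
    using vandermonde[of k m m] by (simp add: add.commute)
  also have "\<dots> = (\<Sum>j\<le>m. (m choose j) * (k choose j))"
    by (intro sum.cong) (auto simp: binomial_symmetric[symmetric])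
  finally show ?thesis .
qed

lemma sum_choose_mult_gbinomial_convolution:
  fixes a :: "'a::field_char_0"
  assumes "j \<le> N"
  shows "(\<Sum>k\<le>N. of_nat (k choose j) * (a gchoose k) * (a gchoose (N - k)))
       = (a gchoose j) * ((2 * a - of_nat j) gchoose (N - j))"
proof -
  have "(\<Sum>k\<le>N. of_nat (k choose j) * (a gchoose k) * (a gchoose (N - k)))
      = (\<Sum>k = j..N. of_nat (k choose j) * (a gchoose k) * (a gchoose (N - k)))"
    by (intro sum.mono_neutral_right) (auto simp: binomial_eq_0)
  also have "\<dots> = (\<Sum>k = j..N. (a gchoose j) * ((a - of_nat j) gchoose (k - j)) * (a gchoose (N - k)))"
    by (intro sum.cong refl)
      (simp add: binomial_gbinomial gbinomial_trinomial_revision[symmetric] mult_ac)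
  also have "\<dots> = (\<Sum>i = 0..N - j. (a gchoose j) * ((a - of_nat j) gchoose i) * (a gchoose (N - j - i)))"
    using assms by (intro sum.reindex_bij_witness[where i = "\<lambda>i. i + j" and j = "\<lambda>k. k - j"]) auto
  also have "\<dots> = (a gchoose j) * (\<Sum>i = 0..N - j. ((a - of_nat j) gchoose i) * (a gchoose (N - j - i)))"
    by (simp add: sum_distrib_left mult_ac)
  also have "\<dots> = (a gchoose j) * ((2 * a - of_nat j) gchoose (N - j))"
    by (subst gbinomial_Vandermonde) (simp add: algebra_simps)
  finally show ?thesis .
qed

lemma sum_choose_add_gbinomial_convolution:
  fixes a :: "'a::field_char_0"
  shows "(\<Sum>k\<le>N. of_nat ((m + k) choose m) * (a gchoose k) * (a gchoose (N - k)))
       = (\<Sum>j\<le>min m N. of_nat (m choose j) * (a gchoose j) * ((2 * a - of_nat j) gchoose (N - j)))"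
proof -
  have "(\<Sum>k\<le>N. of_nat ((m + k) choose m) * (a gchoose k) * (a gchoose (N - k)))
      = (\<Sum>j\<le>m. of_nat (m choose j) * (\<Sum>k\<le>N. of_nat (k choose j) * (a gchoose k) * (a gchoose (N - k))))"
    by (simp add: choose_add_eq_sum_choose_mult sum_distrib_left sum_distrib_right mult_ac
        flip: sum.swap[of _ "{..m}"])
  also have "\<dots> = (\<Sum>j\<le>min m N. of_nat (m choose j) * (\<Sum>k\<le>N. of_nat (k choose j) * (a gchoose k) * (a gchoose (N - k))))"
    by (intro sum.mono_neutral_right) (auto intro!: sum.neutral simp: binomial_eq_0)
  also have "\<dots> = (\<Sum>j\<le>min m N. of_nat (m choose j) * (a gchoose j) * ((2 * a - of_nat j) gchoose (N - j)))"
    by (intro sum.cong refl) (simp add: sum_choose_mult_gbinomial_convolution flip: mult.assoc)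
  finally show ?thesis .
qed

lemma gbinom_of_nat: "gbinom a (int k) = a gchoose k"
  by (simp add: gbinom_def)

theorem lemma5:
  fixes m n :: nat
  assumes "n \<ge> 1"
  shows "(\<Sum>k = 0..n - 1. gbinom (real (m + k)) (int m) * gbinom (- real n) (int k)
            * gbinom (- real n) (int n - 1 - int k))
       = (\<Sum>k = 0..m. gbinom (real m) (int k) * gbinom (- real n) (int k)
            * gbinom (- 2 * real n - real k) (int n - 1 - int k))"
proof -
  define N where "N = n - 1"
  have gbinom_N_minus: "gbinom x (int n - 1 - int k) = (if k \<le> N then x gchoose (N - k) else 0)"
    for x k
    using assms by (auto simp: gbinom_def N_def nat_diff_distrib)
  have "(\<Sum>k = 0..n - 1. gbinom (real (m + k)) (int m) * gbinom (- real n) (int k)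
            * gbinom (- real n) (int n - 1 - int k))
      = (\<Sum>k\<le>N. real ((m + k) choose m) * (- real n gchoose k) * (- real n gchoose (N - k)))"
    by (intro sum.cong) (auto simp: N_def gbinom_N_minus gbinom_of_nat binomial_gbinomial)
  also have "\<dots> = (\<Sum>j\<le>min m N. real (m choose j) * (- real n gchoose j) * ((- 2 * real n - real j) gchoose (N - j)))"
    by (simp add: sum_choose_add_gbinomial_convolution)
  also have "\<dots> = (\<Sum>k = 0..m. gbinom (real m) (int k) * gbinom (- real n) (int k)
            * gbinom (- 2 * real n - real k) (int n - 1 - int k))"
    by (intro sum.mono_neutral_cong_left) (auto simp: gbinom_N_minus gbinom_of_nat binomial_gbinomial)
  finally show ?thesis .
qed

end
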